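(* Let $G=(V,E)$ be a finite connected multigraph, $\mathscr H_0$ a connected component of its exchange graph with vertex set $\mathscr V_0=\mathscr V_{0,1}\sqcup\mathscr V_{0,2}$ (where $\mathscr V_{0,i}=\mathscr V_0\cap\mathscr V_i$). For $u,v\in V$ the following properties are equivalent: (1) $u\not\simeq v$; (2) there exists $(F,T)\in\mathscr V_{0,1}$ such that $u$ and $v$ lie in different connected components of $F$; (3) there exists $(T',F')\in\mathscr V_{0,2}$ such that $u$ and $v$ lie in different connected components of $F'$.
   Context: A spanning tree of $G$ is a subgraph with vertex set $V$ that is a tree; a spanning 2-forest is a subgraph with vertex set $V$, without cycles, with exactly two connected components; $\mathcal{ST}(G)$, $\mathcal{SF}_2(G)$ denote the sets of these. For a spanning subgraph $G'$, $G'+e$ (resp. $G'-e$) is the spanning subgraph with edge set $E(G')\cup\{e\}$ (resp. $E(G')\setminus\{e\}$). The exchange graph $\mathscr H$ of $G$ has vertex set $\mathscr V_1\sqcup\mathscr V_2$, $\mathscr V_1=\{(F,T): F\in\mathcal{SF}_2(G),T\in\mathcal{ST}(G),E(F)\cap E(T)=\emptyset\}$, $\mathscr V_2=\{(T,F):T\in\mathcal{ST}(G),F\in\mathcal{SF}_2(G),E(F)\cap E(T)=\emptyset\}$, with $(F,T)\in\mathscr V_1$ adjacent to $(T',F')\in\mathscr V_2$ iff there is $e\in E(T)$ with $F'=T-e$ and $T'=F+e$. For a spanning 2-forest $F$, $\mathcal{P}(F)$ is the partition of $V$ into the vertex sets of its two components; for a partition $\mathcal{P}$ of $V$, $E(\mathcal{P})$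 is the set of edges of $G$ joining different parts; $T\setminus E(\mathcal{P}(F))$ is the spanning subgraph with edge set $E(T)\setminus E(\mathcal{P}(F))$. The relation $\simeq$ on $V$ is defined by: $u\simeq v$ iff for every $(F,T)\in\mathscr V_{0,1}$, $u$ and $v$ lie in the same connected component of $T\setminus E(\mathcal{P}(F))$. (The paper shows this equals the analogous relation defined using all $(T,F)\in\mathscr V_{0,2}$.) *)

theory Defs
  imports Main
begin

text \<open>A finite multigraph is given by a vertex set V, an edge set E (edge identifiers,
so parallel edges are allowed) and an endpoint map ep. A spanning subgraph is
identified with its edge set S (a subset of E); its vertex set is always V.\<close>

definition multigraph :: "'v set \<Rightarrow> 'e set \<Rightarrow> ('e \<Rightarrow> 'v \<times> 'v) \<Rightarrow> bool" where
  "multigraph V E ep \<longleftrightarrow> finite V \<and> finite E \<and>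
     (\<forall>e\<in>E. fst (ep e) \<in> V \<and> snd (ep e) \<in> V)"

definition adjrel :: "('e \<Rightarrow> 'v \<times> 'v) \<Rightarrow> 'e set \<Rightarrow> ('v \<times> 'v) set" where
  "adjrel ep S = {(a, b). \<exists>e\<in>S. ep e = (a, b) \<or> ep e = (b, a)}"

definition conn :: "'v set \<Rightarrow> ('e \<Rightarrow> 'v \<times> 'v) \<Rightarrow> 'e set \<Rightarrow> 'v \<Rightarrow> 'v \<Rightarrow> bool" where
  "conn V ep S u v \<longleftrightarrow> u \<in> V \<and> v \<in> V \<and> (u, v) \<in> (adjrel ep S)\<^sup>*"

definition connected_mg :: "'v set \<Rightarrow> 'e set \<Rightarrow> ('e \<Rightarrow> 'v \<times> 'v) \<Rightarrow> bool" where
  "connected_mg V E ep \<longleftrightarrow> V \<noteq> {} \<and> (\<forall>u\<in>V. \<forall>v\<in>V. conn V ep E u v)"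

definition components :: "'v set \<Rightarrow> ('e \<Rightarrow> 'v \<times> 'v) \<Rightarrow> 'e set \<Rightarrow> 'v set set" where
  "components V ep S = V // {(u, v). conn V ep S u v}"

text \<open>A spanning subgraph is acyclic iff no edge lies on a cycle, i.e. the endpoints of every
edge are disconnected after removing that edge (this excludes loops and parallel edges).\<close>
definition acyclic_sub :: "'v set \<Rightarrow> 'e set \<Rightarrow> ('e \<Rightarrow> 'v \<times> 'v) \<Rightarrow> 'e set \<Rightarrow> bool" where
  "acyclic_sub V E ep S \<longleftrightarrow> S \<subseteq> E \<and>
     (\<forall>e\<in>S. \<not> conn V ep (S - {e}) (fst (ep e)) (snd (ep e)))"

definition spanning_trees :: "'v set \<Rightarrow> 'e set \<Rightarrow> ('e \<Rightarrow> 'v \<times> 'v) \<Rightarrow> 'e set set" where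
  "spanning_trees V E ep = {S. acyclic_sub V E ep S \<and> card (components V ep S) = 1}"

definition spanning_2forests :: "'v set \<Rightarrow> 'e set \<Rightarrow> ('e \<Rightarrow> 'v \<times> 'v) \<Rightarrow> 'e set set" where
  "spanning_2forests V E ep = {S. acyclic_sub V E ep S \<and> card (components V ep S) = 2}"

text \<open>Vertices of the exchange graph: Inl (F,T) is an element of V_1, Inr (T,F) of V_2.\<close>
type_synonym 'e xvert = "('e set \<times> 'e set) + ('e set \<times> 'e set)"

definition xverts :: "'v set \<Rightarrow> 'e set \<Rightarrow> ('e \<Rightarrow> 'v \<times> 'v) \<Rightarrow> 'e xvert set" where
  "xverts V E ep =
     Inl ` {(F, T). F \<in> spanning_2forests V E ep \<and> T \<in> spanning_trees V E ep \<and> F \<inter> T = {}} \<union>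
     Inr ` {(T, F). T \<in> spanning_trees V E ep \<and> F \<in> spanning_2forests V E ep \<and> F \<inter> T = {}}"

definition xedges :: "'v set \<Rightarrow> 'e set \<Rightarrow> ('e \<Rightarrow> 'v \<times> 'v) \<Rightarrow> ('e xvert \<times> 'e xvert) set" where
  "xedges V E ep = {(x, y). x \<in> xverts V E ep \<and> y \<in> xverts V E ep \<and>
     (\<exists>F T T' F'. ((x = Inl (F, T) \<and> y = Inr (T', F')) \<or> (y = Inl (F, T) \<and> x = Inr (T', F'))) \<and>
        (\<exists>e\<in>T. F' = T - {e} \<and> T' = F \<union> {e}))}"

definition xcomponents :: "'v set \<Rightarrow> 'e set \<Rightarrow> ('e \<Rightarrow> 'v \<times> 'v) \<Rightarrow> 'e xvert set set" where
  "xcomponents V E ep = xverts V E ep // ((xedges V E ep)\<^sup>*)"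

definition V01 :: "'e xvert set \<Rightarrow> ('e set \<times> 'e set) set" where
  "V01 H0 = {p. Inl p \<in> H0}"

definition V02 :: "'e xvert set \<Rightarrow> ('e set \<times> 'e set) set" where
  "V02 H0 = {p. Inr p \<in> H0}"

definition cut_edges :: "'v set \<Rightarrow> 'e set \<Rightarrow> ('e \<Rightarrow> 'v \<times> 'v) \<Rightarrow> 'e set \<Rightarrow> 'e set" where
  "cut_edges V E ep F = {e\<in>E. \<not> conn V ep F (fst (ep e)) (snd (ep e))}"

definition simeq :: "'v set \<Rightarrow> 'e set \<Rightarrow> ('e \<Rightarrow> 'v \<times> 'v) \<Rightarrow> 'e xvert set \<Rightarrow> 'v \<Rightarrow> 'v \<Rightarrow> bool" where
  "simeq V E ep H0 u v \<longleftrightarrow>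
     (\<forall>(F, T)\<in>V01 H0. conn V ep (T - cut_edges V E ep F) u v)"

end

theory Submission
  imports Defs
begin

text \<open>In every vertex (F, T) or (T, F) of the exchange graph, the spanning subgraph
  T - E(P(F)) refines the partition P(F), so a forest separating u and v refutes u \<simeq> v.
  Conversely, if T - E(P(F)) separates u and v while the tree T connects them, then by
  acyclicity a single edge e of T \<inter> E(P(F)) already separates them in T. Moving e from T
  to F is an edge of the exchange graph, and the new forest T - e separates u and v. This
  exchange turns a separating (F, T) in V_{0,1} into a separating forest in V_{0,2}, and
  applied to (T', F') it turns a separating forest in V_{0,2} into one in V_{0,1}.\<close>

lemma conn_refl: "u \<in> V \<Longrightarrow> conn V ep S u u"
  unfolding conn_def by auto

lemma conn_sym: "conn V ep S u v \<Longrightarrow> conn V ep S v u"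
proof -
  have "sym (adjrel ep S)"
    by (rule symI) (auto simp: adjrel_def)
  then show "conn V ep S u v \<Longrightarrow> conn V ep S v u"
    unfolding conn_def by (meson sym_rtrancl symD)
qed

lemma conn_trans: "conn V ep S u v \<Longrightarrow> conn V ep S v w \<Longrightarrow> conn V ep S u w"
  unfolding conn_def by (auto intro: rtrancl_trans)

lemma conn_mono: "conn V ep S u v \<Longrightarrow> S \<subseteq> S' \<Longrightarrow> conn V ep S' u v"
proof -
  assume "S \<subseteq> S'"
  then have "(adjrel ep S)\<^sup>* \<subseteq> (adjrel ep S')\<^sup>*"
    unfolding adjrel_def by (intro rtrancl_mono) blast
  then show "conn V ep S u v \<Longrightarrow> conn V ep S' u v"
    unfolding conn_def by blast
qed

lemma conn_edge:
  assumes "multigraph V E ep" and "S \<subseteq> E" and "e \<in> S"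
  shows "conn V ep S (fst (ep e)) (snd (ep e))"
proof -
  obtain a b where ab: "ep e = (a, b)" by fastforce
  then have "(a, b) \<in> adjrel ep S"
    using assms(3) unfolding adjrel_def by blast
  moreover have "a \<in> V" "b \<in> V"
    using assms ab unfolding multigraph_def by force+
  ultimately show ?thesis
    using ab unfolding conn_def by auto
qed

lemma conn_if_edges_conn:
  assumes "conn V ep S' u v" and "\<And>e. e \<in> S' \<Longrightarrow> conn V ep S (fst (ep e)) (snd (ep e))"
  shows "conn V ep S u v"
proof -
  have "(u, w) \<in> (adjrel ep S')\<^sup>* \<Longrightarrow> conn V ep S u w" for w
  proof (induction rule: rtrancl_induct)
    case base
    then show ?case
      using assms(1) by (simp add: conn_def)
  next
    case (step w z)
    then obtain e where "e \<in> S'" "ep e = (w, z) \<or> ep e = (z, w)"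
      unfolding adjrel_def by blast
    then have "conn V ep S w z"
      using assms(2)[of e] by (auto intro: conn_sym)
    with step.IH show ?case
      by (rule conn_trans)
  qed
  with assms(1) show ?thesis
    unfolding conn_def by blast
qed

lemma rtrancl_insert_sym_pair_cases:
  assumes "sym R" and "(x, y) \<in> (R \<union> {(a, b), (b, a)})\<^sup>*"
  shows "(x, y) \<in> R\<^sup>* \<or> ((x, a) \<in> R\<^sup>* \<and> (b, y) \<in> R\<^sup>*) \<or> ((x, b) \<in> R\<^sup>* \<and> (a, y) \<in> R\<^sup>*)"
  using assms(2)
proof (induction rule: rtrancl_induct)
  case base
  then show ?case by simp
next
  case (step y z)
  have rtrancl_swap: "(p, q) \<in> R\<^sup>* \<Longrightarrow> (q, p) \<in> R\<^sup>*" for p q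
    using sym_rtrancl[OF assms(1)] by (meson symD)
  from step.hyps(2) consider "(y, z) \<in> R" | "y = a" "z = b" | "y = b" "z = a"
    by auto
  then show ?case
    using step.IH by cases (auto intro: rtrancl_into_rtrancl rtrancl_swap)
qed

lemma conn_insert_cases:
  assumes "multigraph V E ep" and "e \<in> E" and "conn V ep (insert e S) x y"
  shows "conn V ep S x y
    \<or> (conn V ep S x (fst (ep e)) \<and> conn V ep S (snd (ep e)) y)
    \<or> (conn V ep S x (snd (ep e)) \<and> conn V ep S (fst (ep e)) y)"
proof -
  obtain a b where ab: "ep e = (a, b)" by fastforce
  have "a \<in> V" "b \<in> V"
    using assms(1,2) ab unfolding multigraph_def by force+
  moreover have "adjrel ep (insert e S) = adjrel ep S \<union> {(a, b), (b, a)}"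
    using ab unfolding adjrel_def by auto
  moreover have "sym (adjrel ep S)"
    by (rule symI) (auto simp: adjrel_def)
  ultimately show ?thesis
    using assms(3) rtrancl_insert_sym_pair_cases[of "adjrel ep S" x y a b] ab
    unfolding conn_def by auto
qed

lemma components_eq_image: "components V ep S = (\<lambda>x. {y. conn V ep S x y}) ` V"
  unfolding components_def quotient_def by auto

lemma conn_class_eq_iff:
  assumes "y \<in> V"
  shows "{z. conn V ep S x z} = {z. conn V ep S y z} \<longleftrightarrow> conn V ep S x y"
proof
  assume "{z. conn V ep S x z} = {z. conn V ep S y z}"
  then show "conn V ep S x y"
    using conn_refl[OF assms] by blast
next
  assume "conn V ep S x y"
  then show "{z. conn V ep S x z} = {z. conn V ep S y z}"
    by (blast intro: conn_sym conn_trans)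
qed

lemma card_image_eq_1_iff: "x \<in> A \<Longrightarrow> card (f ` A) = 1 \<longleftrightarrow> (\<forall>y\<in>A. f y = f x)"
  by (auto simp: card_1_singleton_iff) (metis imageI singletonD)

lemma card_components_eq_1_iff:
  assumes "x \<in> V"
  shows "card (components V ep S) = 1 \<longleftrightarrow> (\<forall>y\<in>V. \<forall>z\<in>V. conn V ep S y z)"
proof -
  have "card (components V ep S) = 1 \<longleftrightarrow> (\<forall>y\<in>V. conn V ep S y x)"
    unfolding components_eq_image card_image_eq_1_iff[OF assms] conn_class_eq_iff[OF assms] ..
  also have "\<dots> \<longleftrightarrow> (\<forall>y\<in>V. \<forall>z\<in>V. conn V ep S y z)"
    using assms by (blast intro: conn_sym conn_trans)
  finally show ?thesis .
qed

lemma image_eq_pair_iff: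
  "{p, q} \<subseteq> f ` A \<Longrightarrow> f ` A = {p, q} \<longleftrightarrow> (\<forall>x\<in>A. f x = p \<or> f x = q)"
  by blast

lemma card_components_eq_2_iff:
  assumes "a \<in> V" and "b \<in> V" and "\<not> conn V ep S a b"
  shows "card (components V ep S) = 2 \<longleftrightarrow> (\<forall>x\<in>V. conn V ep S a x \<or> conn V ep S b x)"
proof -
  let ?cls = "\<lambda>y. {z. conn V ep S y z}"
  have ab: "?cls a \<noteq> ?cls b" "{?cls a, ?cls b} \<subseteq> ?cls ` V"
    using assms by (auto simp: conn_class_eq_iff)
  have "card (?cls ` V) = 2 \<longleftrightarrow> ?cls ` V = {?cls a, ?cls b}"
  proof
    assume card: "card (?cls ` V) = 2"
    then have "finite (?cls ` V)"
      by (simp add: card_ge_0_finite)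
    then show "?cls ` V = {?cls a, ?cls b}"
      using ab card by (metis card_2_iff card_subset_eq)
  qed (use ab in simp)
  also have "\<dots> \<longleftrightarrow> (\<forall>x\<in>V. ?cls x = ?cls a \<or> ?cls x = ?cls b)"
    using image_eq_pair_iff[OF ab(2)] .
  also have "\<dots> \<longleftrightarrow> (\<forall>x\<in>V. conn V ep S a x \<or> conn V ep S b x)"
    using assms by (metis conn_class_eq_iff conn_sym)
  finally show ?thesis
    by (simp add: components_eq_image)
qed

lemma acyclic_sub_subset:
  "acyclic_sub V E ep S \<Longrightarrow> S' \<subseteq> S \<Longrightarrow> acyclic_sub V E ep S'"
  unfolding acyclic_sub_def by (blast dest: conn_mono[where S' = "S - {_}"])

lemma spanning_tree_conn:
  "T \<in> spanning_trees V E ep \<Longrightarrow> u \<in> V \<Longrightarrow> v \<in> V \<Longrightarrow> conn V ep T u v"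
  unfolding spanning_trees_def using card_components_eq_1_iff[of u V ep T] by auto

lemma cut_edge_notin:
  "multigraph V E ep \<Longrightarrow> F \<subseteq> E \<Longrightarrow> e \<in> cut_edges V E ep F \<Longrightarrow> e \<notin> F"
  unfolding cut_edges_def by (auto dest: conn_edge)

lemma spanning_tree_Diff_edge:
  assumes mg: "multigraph V E ep" and T: "T \<in> spanning_trees V E ep" and "e \<in> T"
  shows "T - {e} \<in> spanning_2forests V E ep"
proof -
  define a b where "a = fst (ep e)" and "b = snd (ep e)"
  have acyclic: "acyclic_sub V E ep T"
    using T unfolding spanning_trees_def by blast
  then have "e \<in> E" and sep: "\<not> conn V ep (T - {e}) a b"
    using \<open>e \<in> T\<close> unfolding acyclic_sub_def a_def b_def by auto
  then have ab: "a \<in> V" "b \<in> V"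
    using mg unfolding multigraph_def a_def b_def by auto
  have "conn V ep (T - {e}) a x \<or> conn V ep (T - {e}) b x" if "x \<in> V" for x
  proof -
    have "conn V ep (insert e (T - {e})) a x"
      using spanning_tree_conn[OF T ab(1) that] \<open>e \<in> T\<close> by (simp add: insert_absorb)
    with conn_insert_cases[OF mg \<open>e \<in> E\<close>] show ?thesis
      unfolding a_def b_def by blast
  qed
  then have "card (components V ep (T - {e})) = 2"
    using card_components_eq_2_iff[OF ab sep] by blast
  with acyclic_sub_subset[OF acyclic] show ?thesis
    unfolding spanning_2forests_def by blast
qed

lemma acyclic_sub_insert:
  assumes mg: "multigraph V E ep" and acyclic: "acyclic_sub V E ep F" and "e \<in> E"
    and sep: "\<not> conn V ep F (fst (ep e)) (snd (ep e))"
  shows "acyclic_sub V E ep (insert e F)"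
proof -
  define a b where "a = fst (ep e)" and "b = snd (ep e)"
  have FE: "F \<subseteq> E"
    using acyclic unfolding acyclic_sub_def by blast
  have "e \<notin> F"
    using conn_edge[OF mg FE] sep by blast
  have "\<not> conn V ep (insert e F - {f}) (fst (ep f)) (snd (ep f))" if "f \<in> F" for f
  proof
    define c d where "c = fst (ep f)" and "d = snd (ep f)"
    assume "conn V ep (insert e F - {f}) (fst (ep f)) (snd (ep f))"
    then have "conn V ep (insert e (F - {f})) c d"
      using \<open>e \<notin> F\<close> that unfolding c_def d_def by (metis insert_Diff_if singletonD)
    moreover have "\<not> conn V ep (F - {f}) c d"
      using acyclic that unfolding acyclic_sub_def c_def d_def by blast
    ultimately have "conn V ep (F - {f}) c a \<and> conn V ep (F - {f}) b d
      \<or> conn V ep (F - {f}) c b \<and> conn V ep (F - {f}) a d"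
      using conn_insert_cases[OF mg \<open>e \<in> E\<close>] unfolding a_def b_def by blast
    moreover have "conn V ep F x y" if "conn V ep (F - {f}) x y" for x y
      using conn_mono[OF that] by blast
    moreover have "conn V ep F c d"
      using conn_edge[OF mg FE that] unfolding c_def d_def .
    ultimately have "conn V ep F a b"
      by (meson conn_sym conn_trans)
    with sep show False
      unfolding a_def b_def ..
  qed
  moreover have "\<not> conn V ep (insert e F - {e}) a b"
    using sep \<open>e \<notin> F\<close> unfolding a_def b_def by simp
  ultimately show ?thesis
    using FE \<open>e \<in> E\<close> unfolding acyclic_sub_def a_def b_def by blast
qed

lemma spanning_2forest_insert_cut_edge:
  assumes mg: "multigraph V E ep" and F: "F \<in> spanning_2forests V E ep"
    and e: "e \<in> cut_edges V E ep F"
  shows "insert e F \<in> spanning_trees V E ep"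
proof -
  define a b where "a = fst (ep e)" and "b = snd (ep e)"
  have acyclic: "acyclic_sub V E ep F" and two: "card (components V ep F) = 2"
    using F unfolding spanning_2forests_def by blast+
  have "e \<in> E" and sep: "\<not> conn V ep F a b"
    using e unfolding cut_edges_def a_def b_def by auto
  then have ab: "a \<in> V" "b \<in> V"
    using mg unfolding multigraph_def a_def b_def by auto
  have "conn V ep (insert e F) a b"
    using conn_edge[OF mg _ insertI1] acyclic \<open>e \<in> E\<close>
    unfolding acyclic_sub_def a_def b_def by blast
  moreover have "conn V ep F a x \<or> conn V ep F b x" if "x \<in> V" for x
    using two card_components_eq_2_iff[OF ab sep] that by blast
  ultimately have "conn V ep (insert e F) a x" if "x \<in> V" for x
    using that by (meson conn_mono conn_trans subset_insertI)
  then have "card (components V ep (insert e F)) = 1"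
    using card_components_eq_1_iff[OF ab(1)] by (blast intro: conn_sym conn_trans)
  with acyclic_sub_insert[OF mg acyclic \<open>e \<in> E\<close>] sep show ?thesis
    unfolding spanning_trees_def a_def b_def by blast
qed

text \<open>The edge c lies on every u-v path in S', so a u-v path in S avoiding c would close
  a cycle through c.\<close>
lemma separating_edge_of_subforest:
  assumes mg: "multigraph V E ep" and acyclic: "acyclic_sub V E ep S"
    and "S' \<subseteq> S" and "c \<in> S'"
    and "conn V ep S' u v" and sep: "\<not> conn V ep (S' - {c}) u v"
  shows "\<not> conn V ep (S - {c}) u v"
proof
  assume uv: "conn V ep (S - {c}) u v"
  have "c \<in> E" and cut: "\<not> conn V ep (S - {c}) (fst (ep c)) (snd (ep c))"
    using acyclic \<open>S' \<subseteq> S\<close> \<open>c \<in> S'\<close> unfolding acyclic_sub_def by auto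
  have lift: "conn V ep (S - {c}) x y" if "conn V ep (S' - {c}) x y" for x y
    using conn_mono[OF that] \<open>S' \<subseteq> S\<close> by blast
  have "conn V ep (insert c (S' - {c})) u v"
    using \<open>conn V ep S' u v\<close> \<open>c \<in> S'\<close> by (simp add: insert_absorb)
  with conn_insert_cases[OF mg \<open>c \<in> E\<close>] sep
  have "conn V ep (S' - {c}) u (fst (ep c)) \<and> conn V ep (S' - {c}) (snd (ep c)) v
    \<or> conn V ep (S' - {c}) u (snd (ep c)) \<and> conn V ep (S' - {c}) (fst (ep c)) v"
    by blast
  then show False
  proof (elim disjE conjE)
    assume "conn V ep (S' - {c}) u (fst (ep c))" "conn V ep (S' - {c}) (snd (ep c)) v"
    with uv cut show False
      by (meson lift conn_sym conn_trans)
  next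
    assume "conn V ep (S' - {c}) u (snd (ep c))" "conn V ep (S' - {c}) (fst (ep c)) v"
    with uv cut show False
      by (meson lift conn_sym conn_trans)
  qed
qed

text \<open>Removing the edges of C one at a time, the first removal that disconnects u from v
  is by an edge of C that already separates u from v in S.\<close>
lemma acyclic_separating_edge:
  assumes mg: "multigraph V E ep" and acyclic: "acyclic_sub V E ep S"
    and "finite C" and "conn V ep S u v" and "\<not> conn V ep (S - C) u v"
  shows "\<exists>c\<in>C \<inter> S. \<not> conn V ep (S - {c}) u v"
  using \<open>finite C\<close> \<open>\<not> conn V ep (S - C) u v\<close>
proof (induction C rule: finite_induct)
  case empty
  with \<open>conn V ep S u v\<close> show ?case
    by simp
next
  case (insert c C)
  show ?case
  proof (cases "conn V ep (S - C) u v")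
    case True
    have "S - insert c C = (S - C) - {c}"
      by blast
    then have "c \<in> S - C" and "\<not> conn V ep ((S - C) - {c}) u v"
      using True insert.prems by (metis Diff_empty Diff_insert0 insert_Diff1)+
    then have "\<not> conn V ep (S - {c}) u v"
      using separating_edge_of_subforest[OF mg acyclic _ _ True] by blast
    with \<open>c \<in> S - C\<close> show ?thesis
      by blast
  next
    case False
    with insert.IH show ?thesis
      by blast
  qed
qed

lemma conn_minus_cut_edges:
  "S \<subseteq> E \<Longrightarrow> conn V ep (S - cut_edges V E ep F) u v \<Longrightarrow> conn V ep F u v"
  by (erule conn_if_edges_conn) (auto simp: cut_edges_def conn_def)

lemma exchange_separating_edge:
  assumes mg: "multigraph V E ep"
    and F: "F \<in> spanning_2forests V E ep" and T: "T \<in> spanning_trees V E ep"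
    and "u \<in> V" and "v \<in> V" and sep: "\<not> conn V ep (T - cut_edges V E ep F) u v"
  obtains e where "e \<in> T" and "e \<notin> F"
    and "insert e F \<in> spanning_trees V E ep" and "T - {e} \<in> spanning_2forests V E ep"
    and "\<not> conn V ep (T - {e}) u v"
proof -
  have "finite (cut_edges V E ep F)"
    using mg unfolding multigraph_def cut_edges_def by simp
  moreover have "acyclic_sub V E ep T"
    using T unfolding spanning_trees_def by blast
  ultimately obtain e where e: "e \<in> cut_edges V E ep F" "e \<in> T" "\<not> conn V ep (T - {e}) u v"
    using acyclic_separating_edge[OF mg _ _ spanning_tree_conn[OF T \<open>u \<in> V\<close> \<open>v \<in> V\<close>] sep]
    by blast
  moreover have "e \<notin> F"
    using cut_edge_notin[OF mg _ e(1)] F unfolding spanning_2forests_def acyclic_sub_def by blast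
  ultimately show thesis
    using that spanning_2forest_insert_cut_edge[OF mg F] spanning_tree_Diff_edge[OF mg T] by blast
qed

lemma xcomponent_subset: "H0 \<in> xcomponents V E ep \<Longrightarrow> H0 \<subseteq> xverts V E ep"
proof -
  assume "H0 \<in> xcomponents V E ep"
  then obtain x where "x \<in> xverts V E ep" and H0: "H0 = (xedges V E ep)\<^sup>* `` {x}"
    unfolding xcomponents_def by (rule quotientE)
  moreover have "(xedges V E ep)\<^sup>* `` xverts V E ep = xverts V E ep"
    by (rule Image_closed_trancl) (auto simp: xedges_def)
  ultimately show "H0 \<subseteq> xverts V E ep"
    by blast
qed

lemma xcomponent_closed:
  "H0 \<in> xcomponents V E ep \<Longrightarrow> x \<in> H0 \<Longrightarrow> (x, y) \<in> xedges V E ep \<Longrightarrow> y \<in> H0"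
  unfolding xcomponents_def by (erule quotientE) (auto intro: rtrancl_into_rtrancl)

lemma V01_xcomponentD:
  "H0 \<in> xcomponents V E ep \<Longrightarrow> (F, T) \<in> V01 H0 \<Longrightarrow>
    F \<in> spanning_2forests V E ep \<and> T \<in> spanning_trees V E ep \<and> F \<inter> T = {}"
  using xcomponent_subset unfolding V01_def xverts_def by blast

lemma V02_xcomponentD:
  "H0 \<in> xcomponents V E ep \<Longrightarrow> (T, F) \<in> V02 H0 \<Longrightarrow>
    T \<in> spanning_trees V E ep \<and> F \<in> spanning_2forests V E ep \<and> F \<inter> T = {}"
  using xcomponent_subset unfolding V02_def xverts_def by blast

lemma xedges_Inl_InrI:
  assumes "Inl (F, T) \<in> xverts V E ep" and "Inr (insert e F, T - {e}) \<in> xverts V E ep"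
    and "e \<in> T"
  shows "(Inl (F, T), Inr (insert e F, T - {e})) \<in> xedges V E ep"
  using assms unfolding xedges_def by blast

lemma xedges_Inr_InlI:
  assumes "Inr (T, F) \<in> xverts V E ep" and "Inl (T - {e}, insert e F) \<in> xverts V E ep"
    and "e \<in> T" and "e \<notin> F"
  shows "(Inr (T, F), Inl (T - {e}, insert e F)) \<in> xedges V E ep"
proof -
  have "F = insert e F - {e}" and "T = (T - {e}) \<union> {e}"
    using assms(3,4) by auto
  with assms show ?thesis
    unfolding xedges_def by blast
qed

lemma V02_separating_if_V01:
  assumes mg: "multigraph V E ep" and H0: "H0 \<in> xcomponents V E ep"
    and FT: "(F, T) \<in> V01 H0" and "u \<in> V" and "v \<in> V"
    and sep: "\<not> conn V ep (T - cut_edges V E ep F) u v"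
  shows "\<exists>(T', F')\<in>V02 H0. \<not> conn V ep F' u v"
proof -
  have F: "F \<in> spanning_2forests V E ep" and T: "T \<in> spanning_trees V E ep" and "F \<inter> T = {}"
    using V01_xcomponentD[OF H0 FT] by blast+
  obtain e where "e \<in> T" "insert e F \<in> spanning_trees V E ep"
    "T - {e} \<in> spanning_2forests V E ep" and sep': "\<not> conn V ep (T - {e}) u v"
    using exchange_separating_edge[OF mg F T \<open>u \<in> V\<close> \<open>v \<in> V\<close> sep] .
  with \<open>F \<inter> T = {}\<close> have "Inr (insert e F, T - {e}) \<in> xverts V E ep"
    unfolding xverts_def by blast
  moreover have "Inl (F, T) \<in> H0"
    using FT unfolding V01_def by simp
  ultimately have "(Inl (F, T), Inr (insert e F, T - {e})) \<in> xedges V E ep"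
    using xcomponent_subset[OF H0] \<open>e \<in> T\<close> by (intro xedges_Inl_InrI) auto
  with \<open>Inl (F, T) \<in> H0\<close> have "Inr (insert e F, T - {e}) \<in> H0"
    by (rule xcomponent_closed[OF H0])
  with sep' show ?thesis
    unfolding V02_def by blast
qed

lemma V01_separating_if_V02:
  assumes mg: "multigraph V E ep" and H0: "H0 \<in> xcomponents V E ep"
    and TF: "(T, F) \<in> V02 H0" and "u \<in> V" and "v \<in> V"
    and sep: "\<not> conn V ep (T - cut_edges V E ep F) u v"
  shows "\<exists>(F', T')\<in>V01 H0. \<not> conn V ep F' u v"
proof -
  have F: "F \<in> spanning_2forests V E ep" and T: "T \<in> spanning_trees V E ep" and "F \<inter> T = {}"
    using V02_xcomponentD[OF H0 TF] by blast+
  obtain e where "e \<in> T" "e \<notin> F" "insert e F \<in> spanning_trees V E ep"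
    "T - {e} \<in> spanning_2forests V E ep" and sep': "\<not> conn V ep (T - {e}) u v"
    using exchange_separating_edge[OF mg F T \<open>u \<in> V\<close> \<open>v \<in> V\<close> sep] .
  with \<open>F \<inter> T = {}\<close> have "Inl (T - {e}, insert e F) \<in> xverts V E ep"
    unfolding xverts_def by blast
  moreover have "Inr (T, F) \<in> H0"
    using TF unfolding V02_def by simp
  ultimately have "(Inr (T, F), Inl (T - {e}, insert e F)) \<in> xedges V E ep"
    using xcomponent_subset[OF H0] \<open>e \<in> T\<close> \<open>e \<notin> F\<close> by (intro xedges_Inr_InlI) auto
  with \<open>Inr (T, F) \<in> H0\<close> have "Inl (T - {e}, insert e F) \<in> H0"
    by (rule xcomponent_closed[OF H0])
  with sep' show ?thesis
    unfolding V01_def by blast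
qed

theorem proposition2p10:
  fixes V :: "'v set" and E :: "'e set" and ep :: "'e \<Rightarrow> 'v \<times> 'v"
    and H0 :: "'e xvert set" and u v :: 'v
  assumes "multigraph V E ep"
    and "connected_mg V E ep"
    and "H0 \<in> xcomponents V E ep"
    and "u \<in> V" and "v \<in> V"
  shows "(\<not> simeq V E ep H0 u v \<longleftrightarrow> (\<exists>(F, T)\<in>V01 H0. \<not> conn V ep F u v))
       \<and> (\<not> simeq V E ep H0 u v \<longleftrightarrow> (\<exists>(T', F')\<in>V02 H0. \<not> conn V ep F' u v))"
proof -
  note mg = assms(1) and H0 = assms(3) and uv = assms(4,5)
  have tree_minus_cut: "\<not> conn V ep (T - cut_edges V E ep F) u v"
    if "T \<in> spanning_trees V E ep" and "\<not> conn V ep F u v" for T F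
  proof -
    have "T \<subseteq> E"
      using that(1) unfolding spanning_trees_def acyclic_sub_def by blast
    with that(2) show ?thesis
      by (meson conn_minus_cut_edges)
  qed
  have one_three: "\<exists>(T', F')\<in>V02 H0. \<not> conn V ep F' u v" if "\<not> simeq V E ep H0 u v"
    using that V02_separating_if_V01[OF mg H0 _ uv] unfolding simeq_def by blast
  have three_two: "\<exists>(F, T)\<in>V01 H0. \<not> conn V ep F u v"
    if "\<exists>(T', F')\<in>V02 H0. \<not> conn V ep F' u v"
    using that V01_separating_if_V02[OF mg H0 _ uv] V02_xcomponentD[OF H0] tree_minus_cut by blast
  have two_one: "\<not> simeq V E ep H0 u v" if "\<exists>(F, T)\<in>V01 H0. \<not> conn V ep F u v"
    using that V01_xcomponentD[OF H0] tree_minus_cut unfolding simeq_def by blast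
  show ?thesis
    using one_three three_two two_one by blast
qed

end
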